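(* For any $\Gamma\vdash t:A$ and $\Gamma\vdash u:A$ in the full simply-typed $\lambda$-calculus, if $t\approx_{ctx}u$ then $t\approx_{sem}u$.
   Context: Types: $A,B ::= X \mid A\to B \mid A_1\times A_2 \mid 1 \mid A_1+A_2 \mid 0$ ($X$ atomic). Terms: $x \mid \lambda x.t \mid t\,u \mid (t_1,t_2) \mid \pi_i t \mid () \mid \sigma_i t \mid \mathtt{match}\ t\ \mathtt{with}\ (\sigma_1 x_1\to u_1 \mid \sigma_2 x_2\to u_2) \mid \mathtt{absurd}(t)$ with standard simple typing; $\mathtt{absurd}(t):A$ for any $A$ when $t:0$. $\beta$-equivalence $\equiv_\beta$ is the congruence generated by $(\lambda x.t)u\equiv t[u/x]$, $\pi_i(t_1,t_2)\equiv t_i$, $\mathtt{match}\ \sigma_jt\ \mathtt{with}\ (\sigma_ix_i\to u_i)_i\equiv u_j[t/x_j]$. A closed type contains no atoms; a model $M$ maps atoms to closed types and $M(\cdot)$ substitutes. Contextual equivalence: $t\approx_{ctx}u$ iff for every model $M$ and every one-hole context $C$ with $\emptyset\vdash C[M(\Gamma)\vdash\square:M(A)]:1+1$, $C[M(t)]\equiv_\beta C[M(u)]$. Semantics: closed types denote sets ($[\![A\to B]\!]$ total functions, $[\![A\times B]\!]$ product, $[\![1]\!]=\{\star\}$, $[\![A+B]\!]=\{(1,a)\}\uplus\{(2,b)\}$, $[\![0]\!]=\emptyset$), $[\![A]\!]_M=[\![M(A)]\!]$, valuations $\rho\in[\![\Gamma]\!]_M$ map each $x:A\in\Gamma$ into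 $[\![A]\!]_M$, and $[\![t]\!]_M:[\![\Gamma]\!]_M\to[\![A]\!]_M$ is the standard set-theoretic interpretation. Semantic equivalence: $t\approx_{sem}u$ iff for all models $M$ and all $\rho\in[\![\Gamma]\!]_M$, $[\![t]\!]_M(\rho)=[\![u]\!]_M(\rho)$. *)

theory Defs
  imports Main "HOL-Library.FSet"
begin

datatype ty = Atom nat | Arr ty ty | Prod ty ty | One | Sum ty ty | Zero

primrec closed :: "ty \<Rightarrow> bool" where
  "closed (Atom X) = False"
| "closed (Arr A B) = (closed A \<and> closed B)"
| "closed (Prod A B) = (closed A \<and> closed B)"
| "closed One = True"
| "closed (Sum A B) = (closed A \<and> closed B)"
| "closed Zero = True"

definition model :: "(nat \<Rightarrow> ty) \<Rightarrow> bool" where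
  "model M \<longleftrightarrow> (\<forall>X. closed (M X))"

primrec tsubst :: "(nat \<Rightarrow> ty) \<Rightarrow> ty \<Rightarrow> ty" where
  "tsubst M (Atom X) = M X"
| "tsubst M (Arr A B) = Arr (tsubst M A) (tsubst M B)"
| "tsubst M (Prod A B) = Prod (tsubst M A) (tsubst M B)"
| "tsubst M One = One"
| "tsubst M (Sum A B) = Sum (tsubst M A) (tsubst M B)"
| "tsubst M Zero = Zero"

section \<open>Terms (de Bruijn indices; lambda carries the type of its binder)\<close>

datatype trm =
    Var nat
  | Lam ty trm
  | App trm trm
  | Pair trm trm
  | Fst trm
  | Snd trm
  | Unit
  | Inl trm
  | Inr trm
  | Match trm trm trm   \<comment> \<open>match t with (Inl x1 -> u1 | Inr x2 -> u2); u1,u2 bind index 0\<close>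
  | Absurd trm

primrec msubst :: "(nat \<Rightarrow> ty) \<Rightarrow> trm \<Rightarrow> trm" where
  "msubst M (Var i) = Var i"
| "msubst M (Lam A t) = Lam (tsubst M A) (msubst M t)"
| "msubst M (App t u) = App (msubst M t) (msubst M u)"
| "msubst M (Pair t u) = Pair (msubst M t) (msubst M u)"
| "msubst M (Fst t) = Fst (msubst M t)"
| "msubst M (Snd t) = Snd (msubst M t)"
| "msubst M Unit = Unit"
| "msubst M (Inl t) = Inl (msubst M t)"
| "msubst M (Inr t) = Inr (msubst M t)"
| "msubst M (Match t u1 u2) = Match (msubst M t) (msubst M u1) (msubst M u2)"
| "msubst M (Absurd t) = Absurd (msubst M t)"

primrec lift :: "trm \<Rightarrow> nat \<Rightarrow> trm" where
  "lift (Var i) k = (if i < k then Var i else Var (Suc i))"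
| "lift (Lam A t) k = Lam A (lift t (Suc k))"
| "lift (App t u) k = App (lift t k) (lift u k)"
| "lift (Pair t u) k = Pair (lift t k) (lift u k)"
| "lift (Fst t) k = Fst (lift t k)"
| "lift (Snd t) k = Snd (lift t k)"
| "lift Unit k = Unit"
| "lift (Inl t) k = Inl (lift t k)"
| "lift (Inr t) k = Inr (lift t k)"
| "lift (Match t u1 u2) k = Match (lift t k) (lift u1 (Suc k)) (lift u2 (Suc k))"
| "lift (Absurd t) k = Absurd (lift t k)"

text \<open>subst t s k = t[s/k] (capture-avoiding, removing index k).\<close>
primrec subst :: "trm \<Rightarrow> trm \<Rightarrow> nat \<Rightarrow> trm" where
  "subst (Var i) s k = (if k < i then Var (i - 1) else if i = k then s else Var i)"
| "subst (Lam A t) s k = Lam A (subst t (lift s 0) (Suc k))"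
| "subst (App t u) s k = App (subst t s k) (subst u s k)"
| "subst (Pair t u) s k = Pair (subst t s k) (subst u s k)"
| "subst (Fst t) s k = Fst (subst t s k)"
| "subst (Snd t) s k = Snd (subst t s k)"
| "subst Unit s k = Unit"
| "subst (Inl t) s k = Inl (subst t s k)"
| "subst (Inr t) s k = Inr (subst t s k)"
| "subst (Match t u1 u2) s k =
     Match (subst t s k) (subst u1 (lift s 0) (Suc k)) (subst u2 (lift s 0) (Suc k))"
| "subst (Absurd t) s k = Absurd (subst t s k)"

inductive typing :: "ty list \<Rightarrow> trm \<Rightarrow> ty \<Rightarrow> bool" where
  T_Var: "i < length \<Gamma> \<Longrightarrow> \<Gamma> ! i = A \<Longrightarrow> typing \<Gamma> (Var i) A"
| T_Lam: "typing (A # \<Gamma>) t B \<Longrightarrow> typing \<Gamma> (Lam A t) (Arr A B)"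
| T_App: "typing \<Gamma> t (Arr A B) \<Longrightarrow> typing \<Gamma> u A \<Longrightarrow> typing \<Gamma> (App t u) B"
| T_Pair: "typing \<Gamma> t A \<Longrightarrow> typing \<Gamma> u B \<Longrightarrow> typing \<Gamma> (Pair t u) (Prod A B)"
| T_Fst: "typing \<Gamma> t (Prod A B) \<Longrightarrow> typing \<Gamma> (Fst t) A"
| T_Snd: "typing \<Gamma> t (Prod A B) \<Longrightarrow> typing \<Gamma> (Snd t) B"
| T_Unit: "typing \<Gamma> Unit One"
| T_Inl: "typing \<Gamma> t A \<Longrightarrow> typing \<Gamma> (Inl t) (Sum A B)"
| T_Inr: "typing \<Gamma> t B \<Longrightarrow> typing \<Gamma> (Inr t) (Sum A B)"
| T_Match: "typing \<Gamma> t (Sum A1 A2) \<Longrightarrow> typing (A1 # \<Gamma>) u1 C \<Longrightarrow> typing (A2 # \<Gamma>) u2 C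
             \<Longrightarrow> typing \<Gamma> (Match t u1 u2) C"
| T_Absurd: "typing \<Gamma> t Zero \<Longrightarrow> typing \<Gamma> (Absurd t) A"

inductive beta :: "trm \<Rightarrow> trm \<Rightarrow> bool" where
  b_Lam: "beta (App (Lam A t) u) (subst t u 0)"
| b_Fst: "beta (Fst (Pair t1 t2)) t1"
| b_Snd: "beta (Snd (Pair t1 t2)) t2"
| b_Inl: "beta (Match (Inl t) u1 u2) (subst u1 t 0)"
| b_Inr: "beta (Match (Inr t) u1 u2) (subst u2 t 0)"
| c_Lam: "beta t t' \<Longrightarrow> beta (Lam A t) (Lam A t')"
| c_AppL: "beta t t' \<Longrightarrow> beta (App t u) (App t' u)"
| c_AppR: "beta u u' \<Longrightarrow> beta (App t u) (App t u')"
| c_PairL: "beta t t' \<Longrightarrow> beta (Pair t u) (Pair t' u)"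
| c_PairR: "beta u u' \<Longrightarrow> beta (Pair t u) (Pair t u')"
| c_Fst: "beta t t' \<Longrightarrow> beta (Fst t) (Fst t')"
| c_Snd: "beta t t' \<Longrightarrow> beta (Snd t) (Snd t')"
| c_Inl: "beta t t' \<Longrightarrow> beta (Inl t) (Inl t')"
| c_Inr: "beta t t' \<Longrightarrow> beta (Inr t) (Inr t')"
| c_Match0: "beta t t' \<Longrightarrow> beta (Match t u1 u2) (Match t' u1 u2)"
| c_Match1: "beta u1 u1' \<Longrightarrow> beta (Match t u1 u2) (Match t u1' u2)"
| c_Match2: "beta u2 u2' \<Longrightarrow> beta (Match t u1 u2) (Match t u1 u2')"
| c_Absurd: "beta t t' \<Longrightarrow> beta (Absurd t) (Absurd t')"

definition beq :: "trm \<Rightarrow> trm \<Rightarrow> bool" where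
  "beq = (sup beta beta\<inverse>\<inverse>)\<^sup>*\<^sup>*"

datatype ctx =
    Hole
  | CLam ty ctx
  | CAppL ctx trm | CAppR trm ctx
  | CPairL ctx trm | CPairR trm ctx
  | CFst ctx | CSnd ctx
  | CInl ctx | CInr ctx
  | CMatch0 ctx trm trm | CMatch1 trm ctx trm | CMatch2 trm trm ctx
  | CAbsurd ctx

text \<open>Plugging is literal (binders of the context capture the hole's free variables).\<close>
primrec plug :: "ctx \<Rightarrow> trm \<Rightarrow> trm" where
  "plug Hole s = s"
| "plug (CLam A C) s = Lam A (plug C s)"
| "plug (CAppL C u) s = App (plug C s) u"
| "plug (CAppR t C) s = App t (plug C s)"
| "plug (CPairL C u) s = Pair (plug C s) u"
| "plug (CPairR t C) s = Pair t (plug C s)"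
| "plug (CFst C) s = Fst (plug C s)"
| "plug (CSnd C) s = Snd (plug C s)"
| "plug (CInl C) s = Inl (plug C s)"
| "plug (CInr C) s = Inr (plug C s)"
| "plug (CMatch0 C u1 u2) s = Match (plug C s) u1 u2"
| "plug (CMatch1 t C u2) s = Match t (plug C s) u2"
| "plug (CMatch2 t u1 C) s = Match t u1 (plug C s)"
| "plug (CAbsurd C) s = Absurd (plug C s)"

text \<open>ctyping D C G A B  means  D |- C[G |- hole : A] : B.\<close>
inductive ctyping :: "ty list \<Rightarrow> ctx \<Rightarrow> ty list \<Rightarrow> ty \<Rightarrow> ty \<Rightarrow> bool" where
  CT_Hole: "ctyping \<Gamma> Hole \<Gamma> A A"
| CT_Lam: "ctyping (A' # \<Delta>) C \<Gamma> A B \<Longrightarrow> ctyping \<Delta> (CLam A' C) \<Gamma> A (Arr A' B)"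
| CT_AppL: "ctyping \<Delta> C \<Gamma> A (Arr B1 B2) \<Longrightarrow> typing \<Delta> u B1 \<Longrightarrow> ctyping \<Delta> (CAppL C u) \<Gamma> A B2"
| CT_AppR: "typing \<Delta> t (Arr B1 B2) \<Longrightarrow> ctyping \<Delta> C \<Gamma> A B1 \<Longrightarrow> ctyping \<Delta> (CAppR t C) \<Gamma> A B2"
| CT_PairL: "ctyping \<Delta> C \<Gamma> A B1 \<Longrightarrow> typing \<Delta> u B2 \<Longrightarrow> ctyping \<Delta> (CPairL C u) \<Gamma> A (Prod B1 B2)"
| CT_PairR: "typing \<Delta> t B1 \<Longrightarrow> ctyping \<Delta> C \<Gamma> A B2 \<Longrightarrow> ctyping \<Delta> (CPairR t C) \<Gamma> A (Prod B1 B2)"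
| CT_Fst: "ctyping \<Delta> C \<Gamma> A (Prod B1 B2) \<Longrightarrow> ctyping \<Delta> (CFst C) \<Gamma> A B1"
| CT_Snd: "ctyping \<Delta> C \<Gamma> A (Prod B1 B2) \<Longrightarrow> ctyping \<Delta> (CSnd C) \<Gamma> A B2"
| CT_Inl: "ctyping \<Delta> C \<Gamma> A B1 \<Longrightarrow> ctyping \<Delta> (CInl C) \<Gamma> A (Sum B1 B2)"
| CT_Inr: "ctyping \<Delta> C \<Gamma> A B2 \<Longrightarrow> ctyping \<Delta> (CInr C) \<Gamma> A (Sum B1 B2)"
| CT_Match0: "ctyping \<Delta> C \<Gamma> A (Sum B1 B2) \<Longrightarrow> typing (B1 # \<Delta>) u1 D \<Longrightarrow> typing (B2 # \<Delta>) u2 D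
              \<Longrightarrow> ctyping \<Delta> (CMatch0 C u1 u2) \<Gamma> A D"
| CT_Match1: "typing \<Delta> t (Sum B1 B2) \<Longrightarrow> ctyping (B1 # \<Delta>) C \<Gamma> A D \<Longrightarrow> typing (B2 # \<Delta>) u2 D
              \<Longrightarrow> ctyping \<Delta> (CMatch1 t C u2) \<Gamma> A D"
| CT_Match2: "typing \<Delta> t (Sum B1 B2) \<Longrightarrow> typing (B1 # \<Delta>) u1 D \<Longrightarrow> ctyping (B2 # \<Delta>) C \<Gamma> A D
              \<Longrightarrow> ctyping \<Delta> (CMatch2 t u1 C) \<Gamma> A D"
| CT_Absurd: "ctyping \<Delta> C \<Gamma> A Zero \<Longrightarrow> ctyping \<Delta> (CAbsurd C) \<Gamma> A B"

definition ctx_equiv :: "ty list \<Rightarrow> trm \<Rightarrow> trm \<Rightarrow> ty \<Rightarrow> bool" where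
  "ctx_equiv \<Gamma> t u A \<longleftrightarrow>
     (\<forall>M C. model M \<longrightarrow>
        ctyping [] C (map (tsubst M) \<Gamma>) (tsubst M A) (Sum One One) \<longrightarrow>
        beq (plug C (msubst M t)) (plug C (msubst M u)))"

text \<open>Universal value domain; a (total) function between the finite sets denoted by
  closed types is represented by its graph.\<close>
datatype val = VUnit | VPair val val | VInl val | VInr val | VFun "(val \<times> val) fset"

primrec dom :: "ty \<Rightarrow> val set" where
  "dom (Atom X) = {}"
| "dom (Arr A B) = {VFun g | g. fst ` fset g = dom A \<and> snd ` fset g \<subseteq> dom B
                              \<and> (\<forall>a b b'. (a, b) \<in> fset g \<longrightarrow> (a, b') \<in> fset g \<longrightarrow> b = b')}"
| "dom (Prod A B) = {VPair a b | a b. a \<in> dom A \<and> b \<in> dom B}"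
| "dom One = {VUnit}"
| "dom (Sum A B) = VInl ` dom A \<union> VInr ` dom B"
| "dom Zero = {}"

fun vapp :: "val \<Rightarrow> val \<Rightarrow> val" where
  "vapp (VFun g) a = (THE b. (a, b) \<in> fset g)"
| "vapp _ a = undefined"

fun vfst :: "val \<Rightarrow> val" where
  "vfst (VPair a b) = a"
| "vfst _ = undefined"

fun vsnd :: "val \<Rightarrow> val" where
  "vsnd (VPair a b) = b"
| "vsnd _ = undefined"

primrec sem :: "(nat \<Rightarrow> ty) \<Rightarrow> trm \<Rightarrow> val list \<Rightarrow> val" where
  "sem M (Var i) \<rho> = \<rho> ! i"
| "sem M (Lam A t) \<rho> = VFun (Abs_fset ((\<lambda>a. (a, sem M t (a # \<rho>))) ` dom (tsubst M A)))"
| "sem M (App t u) \<rho> = vapp (sem M t \<rho>) (sem M u \<rho>)"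
| "sem M (Pair t u) \<rho> = VPair (sem M t \<rho>) (sem M u \<rho>)"
| "sem M (Fst t) \<rho> = vfst (sem M t \<rho>)"
| "sem M (Snd t) \<rho> = vsnd (sem M t \<rho>)"
| "sem M Unit \<rho> = VUnit"
| "sem M (Inl t) \<rho> = VInl (sem M t \<rho>)"
| "sem M (Inr t) \<rho> = VInr (sem M t \<rho>)"
| "sem M (Match t u1 u2) \<rho> =
     (case sem M t \<rho> of VInl v \<Rightarrow> sem M u1 (v # \<rho>)
                       | VInr v \<Rightarrow> sem M u2 (v # \<rho>)
                       | _ \<Rightarrow> undefined)"
| "sem M (Absurd t) \<rho> = undefined"

definition env_dom :: "(nat \<Rightarrow> ty) \<Rightarrow> ty list \<Rightarrow> val list set" where
  "env_dom M \<Gamma> = {\<rho>. length \<rho> = length \<Gamma> \<and> (\<forall>i < length \<Gamma>. \<rho> ! i \<in> dom (tsubst M (\<Gamma> ! i)))}"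

definition sem_equiv :: "ty list \<Rightarrow> trm \<Rightarrow> trm \<Rightarrow> bool" where
  "sem_equiv \<Gamma> t u \<longleftrightarrow>
     (\<forall>M \<rho>. model M \<longrightarrow> \<rho> \<in> env_dom M \<Gamma> \<longrightarrow> sem M t \<rho> = sem M u \<rho>)"

end

theory Submission
  imports Defs "HOL-Library.Confluence"
begin

text \<open>
  Suppose the values of t and u differed at a valuation \<rho> in a model M. Every element of a
  closed type is the value of a closed term and has a closed characteristic function into
  1 + 1; this goes by induction on the type, the arrow case defining a function by case
  distinction over its finitely many arguments and testing it by evaluating it at all of them.
  Binding the free variables to closed terms denoting \<rho> and applying the characteristic
  function of the value of t gives a boolean context C with C[t] evaluating to true and C[u] to
  false. This contradicts the beta-equivalence of C[t] and C[u], since beta-conversion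
  preserves the value of well-typed terms: a conversion may pass through ill-typed terms, so
  one goes through a common reduct (Church-Rosser, via Takahashi's complete developments),
  which subject reduction keeps well-typed.
\<close>

lemma lift_lift:
  "i \<le> k \<Longrightarrow> lift (lift t i) (Suc k) = lift (lift t k) i"
  by (induct t arbitrary: i k) auto

lemma lift_subst [simp]:
  "j \<le> i \<Longrightarrow> lift (subst t s j) i = subst (lift t (Suc i)) (lift s i) j"
  by (induct t arbitrary: i j s) (simp_all add: diff_Suc lift_lift split: nat.split)

lemma lift_subst_lt:
  "i \<le> j \<Longrightarrow> lift (subst t s j) i = subst (lift t i) (lift s i) (Suc j)"
  by (induct t arbitrary: i j s) (auto simp: lift_lift)

lemma subst_lift [simp]: "subst (lift t k) s k = t"
  by (induct t arbitrary: k s) simp_all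

lemma subst_subst:
  "i \<le> j \<Longrightarrow> subst (subst t (lift v i) (Suc j)) (subst u v j) i = subst (subst t u i) v j"
  by (induct t arbitrary: i j u v)
    (simp_all add: diff_Suc lift_lift [symmetric] lift_subst_lt split: nat.split)

section \<open>Parallel reduction and confluence\<close>

inductive par :: "trm \<Rightarrow> trm \<Rightarrow> bool" where
  p_Var: "par (Var i) (Var i)"
| p_Unit: "par Unit Unit"
| p_Lam: "par t t' \<Longrightarrow> par (Lam A t) (Lam A t')"
| p_App: "par t t' \<Longrightarrow> par u u' \<Longrightarrow> par (App t u) (App t' u')"
| p_Pair: "par t t' \<Longrightarrow> par u u' \<Longrightarrow> par (Pair t u) (Pair t' u')"
| p_Fst: "par t t' \<Longrightarrow> par (Fst t) (Fst t')"
| p_Snd: "par t t' \<Longrightarrow> par (Snd t) (Snd t')"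
| p_Inl: "par t t' \<Longrightarrow> par (Inl t) (Inl t')"
| p_Inr: "par t t' \<Longrightarrow> par (Inr t) (Inr t')"
| p_Match: "par t t' \<Longrightarrow> par u1 u1' \<Longrightarrow> par u2 u2' \<Longrightarrow> par (Match t u1 u2) (Match t' u1' u2')"
| p_Absurd: "par t t' \<Longrightarrow> par (Absurd t) (Absurd t')"
| p_beta: "par t t' \<Longrightarrow> par u u' \<Longrightarrow> par (App (Lam A t) u) (subst t' u' 0)"
| p_fst: "par t1 t1' \<Longrightarrow> par (Fst (Pair t1 t2)) t1'"
| p_snd: "par t2 t2' \<Longrightarrow> par (Snd (Pair t1 t2)) t2'"
| p_inl: "par t t' \<Longrightarrow> par u1 u1' \<Longrightarrow> par (Match (Inl t) u1 u2) (subst u1' t' 0)"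
| p_inr: "par t t' \<Longrightarrow> par u2 u2' \<Longrightarrow> par (Match (Inr t) u1 u2) (subst u2' t' 0)"

lemma par_refl [simp, intro]: "par t t"
  by (induct t) (auto intro: par.intros)

lemma par_lift: "par t t' \<Longrightarrow> par (lift t k) (lift t' k)"
  by (induct arbitrary: k rule: par.induct) (auto intro: par.intros)

lemma par_subst: "par t t' \<Longrightarrow> par s s' \<Longrightarrow> par (subst t s k) (subst t' s' k)"
proof (induct arbitrary: s s' k rule: par.induct)
  case (p_beta t t' u u' A)
  then have "par (App (Lam A (subst t (lift s 0) (Suc k))) (subst u s k))
                 (subst (subst t' (lift s' 0) (Suc k)) (subst u' s' k) 0)"
    by (intro par.p_beta) (simp_all add: par_lift)
  then show ?case by (simp add: subst_subst[of 0])
next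
  case (p_inl t t' u1 u1' u2)
  then have "par (Match (Inl (subst t s k)) (subst u1 (lift s 0) (Suc k)) (subst u2 (lift s 0) (Suc k)))
                 (subst (subst u1' (lift s' 0) (Suc k)) (subst t' s' k) 0)"
    by (intro par.p_inl) (simp_all add: par_lift)
  then show ?case by (simp add: subst_subst[of 0])
next
  case (p_inr t t' u2 u2' u1)
  then have "par (Match (Inr (subst t s k)) (subst u1 (lift s 0) (Suc k)) (subst u2 (lift s 0) (Suc k)))
                 (subst (subst u2' (lift s' 0) (Suc k)) (subst t' s' k) 0)"
    by (intro par.p_inr) (simp_all add: par_lift)
  then show ?case by (simp add: subst_subst[of 0])
qed (simp_all add: par.intros par_lift)

fun develop :: "trm \<Rightarrow> trm" where
  "develop (App (Lam A t) u) = subst (develop t) (develop u) 0"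
| "develop (App t u) = App (develop t) (develop u)"
| "develop (Fst (Pair t u)) = develop t"
| "develop (Fst t) = Fst (develop t)"
| "develop (Snd (Pair t u)) = develop u"
| "develop (Snd t) = Snd (develop t)"
| "develop (Match (Inl t) u1 u2) = subst (develop u1) (develop t) 0"
| "develop (Match (Inr t) u1 u2) = subst (develop u2) (develop t) 0"
| "develop (Match t u1 u2) = Match (develop t) (develop u1) (develop u2)"
| "develop (Var i) = Var i"
| "develop (Lam A t) = Lam A (develop t)"
| "develop (Pair t u) = Pair (develop t) (develop u)"
| "develop Unit = Unit"
| "develop (Inl t) = Inl (develop t)"
| "develop (Inr t) = Inr (develop t)"
| "develop (Absurd t) = Absurd (develop t)"

inductive_cases par_LamE: "par (Lam A t) s"
inductive_cases par_PairE: "par (Pair t u) s"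
inductive_cases par_InlE: "par (Inl t) s"
inductive_cases par_InrE: "par (Inr t) s"

lemma par_develop: "par t t' \<Longrightarrow> par t' (develop t)"
proof (induct rule: par.induct)
  case (p_App t t' u u')
  then show ?case by (cases t) (auto elim!: par_LamE intro: par.intros)
next
  case (p_Fst t t')
  then show ?case by (cases t) (auto elim!: par_PairE intro: par.intros)
next
  case (p_Snd t t')
  then show ?case by (cases t) (auto elim!: par_PairE intro: par.intros)
next
  case (p_Match t t' u1 u1' u2 u2')
  then show ?case by (cases t) (auto elim!: par_InlE par_InrE intro: par.intros)
qed (auto intro: par.intros par_subst)

lemma par_diamond: "par t t1 \<Longrightarrow> par t t2 \<Longrightarrow> \<exists>s. par t1 s \<and> par t2 s"
  using par_develop by blast

lemma beta_le_par: "beta \<le> par"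
proof
  show "par t t'" if "beta t t'" for t t'
    using that by induct (auto intro: par.intros)
qed

lemma beq_common_par_reduct:
  assumes "beq t u"
  shows "\<exists>s. par\<^sup>*\<^sup>* t s \<and> par\<^sup>*\<^sup>* u s"
proof -
  have "strong_confluentp par"
    by (rule strong_confluentpI) (use par_diamond in blast)
  then have "equivclp par = par\<^sup>*\<^sup>* OO par\<inverse>\<inverse>\<^sup>*\<^sup>*"
    by (intro semiconfluentp_equivclp strong_confluentp_into_semiconfluentp)
  moreover have "beq \<le> equivclp par"
    unfolding beq_def equivclp_def symclp_pointfree
    by (intro rtranclp_mono sup_mono beta_le_par conversep_mono[THEN iffD2])
  ultimately show ?thesis
    using assms by (auto simp: rtranclp_conversep)
qed

inductive_simps typing_Var_iff: "typing \<Gamma> (Var i) A"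
inductive_simps typing_Lam_iff: "typing \<Gamma> (Lam B t) A"
inductive_simps typing_App_iff: "typing \<Gamma> (App t u) A"
inductive_simps typing_Pair_iff: "typing \<Gamma> (Pair t u) A"
inductive_simps typing_Fst_iff: "typing \<Gamma> (Fst t) A"
inductive_simps typing_Snd_iff: "typing \<Gamma> (Snd t) A"
inductive_simps typing_Unit_iff: "typing \<Gamma> Unit A"
inductive_simps typing_Inl_iff: "typing \<Gamma> (Inl t) A"
inductive_simps typing_Inr_iff: "typing \<Gamma> (Inr t) A"
inductive_simps typing_Match_iff: "typing \<Gamma> (Match t u1 u2) A"
inductive_simps typing_Absurd_iff: "typing \<Gamma> (Absurd t) A"

lemmas typing_iffs = typing_Var_iff typing_Lam_iff typing_App_iff typing_Pair_iff typing_Fst_iff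
  typing_Snd_iff typing_Unit_iff typing_Inl_iff typing_Inr_iff typing_Match_iff typing_Absurd_iff

lemma typing_lift:
  "typing \<Gamma> t A \<Longrightarrow> k \<le> length \<Gamma> \<Longrightarrow> typing (take k \<Gamma> @ B # drop k \<Gamma>) (lift t k) A"
proof (induct arbitrary: k rule: typing.induct)
  case (T_Var i \<Gamma> A)
  then show ?case by (auto simp: nth_append typing_Var_iff min_def)
next
  case (T_Lam A \<Gamma> t C)
  then show ?case using T_Lam(2)[of "Suc k"] by (auto intro: typing.T_Lam)
next
  case (T_Match \<Gamma> t A1 A2 u1 C u2)
  then show ?case using T_Match(4,6)[of "Suc k"] by (auto intro: typing.T_Match)
qed (auto intro: typing.intros)

lemma typing_lift0: "typing \<Gamma> t A \<Longrightarrow> typing (B # \<Gamma>) (lift t 0) A"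
  using typing_lift[of \<Gamma> t A 0 B] by simp

lemma lift_closed: "typing \<Gamma> t A \<Longrightarrow> length \<Gamma> \<le> k \<Longrightarrow> lift t k = t"
  by (induct arbitrary: k rule: typing.induct) auto

lemma typing_closed: "typing [] t A \<Longrightarrow> typing \<Gamma> t A"
proof (induct \<Gamma>)
  case (Cons B \<Gamma>)
  then have "typing (B # \<Gamma>) (lift t 0) A" by (simp add: typing_lift0)
  moreover have "lift t 0 = t" using Cons(2) lift_closed by fastforce
  ultimately show ?case by simp
qed simp

lemma typing_subst:
  "typing \<Gamma>' t A \<Longrightarrow> \<Gamma>' = take k \<Gamma> @ B # drop k \<Gamma> \<Longrightarrow> k \<le> length \<Gamma> \<Longrightarrow> typing \<Gamma> s B
   \<Longrightarrow> typing \<Gamma> (subst t s k) A"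
proof (induct arbitrary: \<Gamma> k s rule: typing.induct)
  case (T_Var i \<Gamma>' A)
  show ?case
  proof (cases i k rule: linorder_cases)
    case greater
    then obtain j where "i = Suc j" "k \<le> j" by (cases i) auto
    then show ?thesis using T_Var by (auto simp: nth_append typing_Var_iff min_absorb2)
  qed (use T_Var in \<open>auto simp: nth_append typing_Var_iff min_def\<close>)
next
  case (T_Lam A \<Gamma>' t C)
  have "typing (A # \<Gamma>) (subst t (lift s 0) (Suc k)) C"
    by (rule T_Lam(2)) (use T_Lam in \<open>auto intro: typing_lift0\<close>)
  then show ?case by (simp add: typing.T_Lam)
next
  case (T_Match \<Gamma>' t A1 A2 u1 C u2)
  have "typing (A1 # \<Gamma>) (subst u1 (lift s 0) (Suc k)) C"
    by (rule T_Match(4)) (use T_Match in \<open>auto intro: typing_lift0\<close>)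
  moreover have "typing (A2 # \<Gamma>) (subst u2 (lift s 0) (Suc k)) C"
    by (rule T_Match(6)) (use T_Match in \<open>auto intro: typing_lift0\<close>)
  ultimately show ?case using T_Match by (auto intro: typing.T_Match)
qed (fastforce intro: typing.intros)+

lemma typing_subst0: "typing (B # \<Gamma>) t A \<Longrightarrow> typing \<Gamma> s B \<Longrightarrow> typing \<Gamma> (subst t s 0) A"
  by (rule typing_subst[where k = 0]) simp_all

lemma par_preserves_typing: "par t t' \<Longrightarrow> typing \<Gamma> t A \<Longrightarrow> typing \<Gamma> t' A"
  by (induct arbitrary: \<Gamma> A rule: par.induct) (simp add: typing_iffs; blast intro: typing_subst0)+

lemma tsubst_closed: "closed T \<Longrightarrow> tsubst M T = T"
  by (induct T) auto

lemma closed_tsubst: "model M \<Longrightarrow> closed (tsubst M T)"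
  by (induct T) (auto simp: model_def)

(* Only meaningful for finite D: Abs_fset of an infinite set is unspecified. *)
definition vgraph :: "val set \<Rightarrow> (val \<Rightarrow> val) \<Rightarrow> val" where
  "vgraph D f = VFun (Abs_fset ((\<lambda>x. (x, f x)) ` D))"

lemma sem_Lam [simp]: "sem M (Lam A t) \<rho> = vgraph (dom (tsubst M A)) (\<lambda>a. sem M t (a # \<rho>))"
  by (simp add: vgraph_def)

declare sem.simps(2) [simp del]

lemma vgraph_cong: "(\<And>x. x \<in> D \<Longrightarrow> f x = g x) \<Longrightarrow> vgraph D f = vgraph D g"
  unfolding vgraph_def by (simp cong: image_cong)

lemma vapp_vgraph: "finite D \<Longrightarrow> a \<in> D \<Longrightarrow> vapp (vgraph D f) a = f a"
  by (auto simp: vgraph_def Abs_fset_inverse)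

lemma vgraph_in_dom:
  assumes "finite (dom A)" and "\<And>x. x \<in> dom A \<Longrightarrow> f x \<in> dom B"
  shows "vgraph (dom A) f \<in> dom (Arr A B)"
proof -
  have "fset (Abs_fset ((\<lambda>x. (x, f x)) ` dom A)) = (\<lambda>x. (x, f x)) ` dom A"
    using assms(1) by (simp add: Abs_fset_inverse)
  then show ?thesis using assms(2) by (auto simp: vgraph_def image_image)
qed

lemma dom_ArrE:
  assumes "f \<in> dom (Arr A B)"
  obtains g where "f = VFun g" "fst ` fset g = dom A" "snd ` fset g \<subseteq> dom B"
    "\<And>a b b'. (a, b) \<in> fset g \<Longrightarrow> (a, b') \<in> fset g \<Longrightarrow> b = b'"
  using assms by auto

lemma vapp_in_graph:
  assumes "f \<in> dom (Arr A B)" and "f = VFun g" and "a \<in> dom A"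
  shows "(a, vapp f a) \<in> fset g"
proof -
  obtain b where b: "(a, b) \<in> fset g"
    using assms by (elim dom_ArrE) (metis fst_conv imageE surjective_pairing val.inject(4))
  have "vapp f a = b"
    using assms(1,2) b by (elim dom_ArrE) (simp, blast)
  with b show ?thesis by simp
qed

lemma vapp_in_dom:
  assumes "f \<in> dom (Arr A B)" and "a \<in> dom A"
  shows "vapp f a \<in> dom B"
proof -
  obtain g where g: "f = VFun g" "snd ` fset g \<subseteq> dom B"
    using assms(1) by (elim dom_ArrE) blast
  then have "(a, vapp f a) \<in> fset g" using vapp_in_graph assms by blast
  then show ?thesis using g(2) by (metis image_subset_iff snd_conv)
qed

lemma vgraph_vapp:
  assumes f: "f \<in> dom (Arr A B)"
  shows "vgraph (dom A) (vapp f) = f"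
proof -
  obtain g where g: "f = VFun g" "fst ` fset g = dom A"
    and uniq: "\<And>a b b'. (a, b) \<in> fset g \<Longrightarrow> (a, b') \<in> fset g \<Longrightarrow> b = b'"
    using f by (elim dom_ArrE) blast
  have "(\<lambda>x. (x, vapp f x)) ` dom A = fset g"
  proof
    show "(\<lambda>x. (x, vapp f x)) ` dom A \<subseteq> fset g"
      using vapp_in_graph[OF f g(1)] by auto
    show "fset g \<subseteq> (\<lambda>x. (x, vapp f x)) ` dom A"
    proof
      fix p assume p: "p \<in> fset g"
      then have a: "fst p \<in> dom A" using g(2) by blast
      have "snd p = vapp f (fst p)"
        using uniq[of "fst p" "snd p"] vapp_in_graph[OF f g(1) a] p by simp
      then have "p = (fst p, vapp f (fst p))" by (simp add: prod_eq_iff)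
      then show "p \<in> (\<lambda>x. (x, vapp f x)) ` dom A" using a by (rule image_eqI)
    qed
  qed
  then show ?thesis by (simp add: vgraph_def g(1) fset_inverse)
qed

lemma vfun_ext:
  assumes "f \<in> dom (Arr A B)" and "h \<in> dom (Arr A B)" and "\<And>x. x \<in> dom A \<Longrightarrow> vapp f x = vapp h x"
  shows "f = h"
proof -
  have "f = vgraph (dom A) (vapp f)" using assms(1) by (simp add: vgraph_vapp)
  also have "\<dots> = vgraph (dom A) (vapp h)" using assms(3) by (rule vgraph_cong)
  also have "\<dots> = h" using assms(2) by (simp add: vgraph_vapp)
  finally show ?thesis .
qed

lemma finite_dom: "closed T \<Longrightarrow> finite (dom T)"
proof (induct T)
  case (Arr A B)
  have "dom (Arr A B) \<subseteq> (\<lambda>G. VFun (Abs_fset G)) ` Pow (dom A \<times> dom B)"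
  proof
    fix f assume "f \<in> dom (Arr A B)"
    then obtain g where g: "f = VFun g" "fst ` fset g = dom A" "snd ` fset g \<subseteq> dom B"
      by (elim dom_ArrE) blast
    have "fset g \<subseteq> dom A \<times> dom B"
    proof
      fix p assume "p \<in> fset g"
      then show "p \<in> dom A \<times> dom B" using g(2,3) by (cases p) force
    qed
    then show "f \<in> (\<lambda>G. VFun (Abs_fset G)) ` Pow (dom A \<times> dom B)"
      using g(1) by (metis PowI fset_inverse image_eqI)
  qed
  moreover have "finite (Pow (dom A \<times> dom B))" using Arr by simp
  ultimately show ?case by (rule finite_subset[OF _ finite_imageI])
next
  case (Prod A B)
  have "dom (Prod A B) = case_prod VPair ` (dom A \<times> dom B)" by auto
  then show ?case using Prod by simp
qed auto

declare dom.simps(2) [simp del]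

lemma finite_dom_tsubst: "model M \<Longrightarrow> finite (dom (tsubst M A))"
  by (simp add: closed_tsubst finite_dom)

lemma env_dom_iff_list_all2: "\<rho> \<in> env_dom M \<Gamma> \<longleftrightarrow> list_all2 (\<lambda>v A. v \<in> dom (tsubst M A)) \<rho> \<Gamma>"
  by (auto simp: env_dom_def list_all2_conv_all_nth)

lemma env_dom_Cons [simp]:
  "v # \<rho> \<in> env_dom M (A # \<Gamma>) \<longleftrightarrow> v \<in> dom (tsubst M A) \<and> \<rho> \<in> env_dom M \<Gamma>"
  by (simp add: env_dom_iff_list_all2)

lemma sem_in_dom:
  "typing \<Gamma> t A \<Longrightarrow> model M \<Longrightarrow> \<rho> \<in> env_dom M \<Gamma> \<Longrightarrow> sem M t \<rho> \<in> dom (tsubst M A)"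
proof (induct arbitrary: \<rho> rule: typing.induct)
  case (T_Var i \<Gamma> A)
  then show ?case by (auto simp: env_dom_def)
next
  case (T_Lam A \<Gamma> t B)
  have "finite (dom (tsubst M A))" using T_Lam(3) by (rule finite_dom_tsubst)
  then show ?case unfolding sem_Lam tsubst.simps by (rule vgraph_in_dom) (use T_Lam in auto)
next
  case (T_App \<Gamma> t A B u)
  then show ?case by (auto intro: vapp_in_dom)
next
  case (T_Match \<Gamma> t A1 A2 u1 C u2)
  then show ?case by (cases "sem M t \<rho>") fastforce+
next
  case (T_Absurd \<Gamma> t A)
  then show ?case by fastforce
qed fastforce+

lemma sem_lift:
  "k \<le> length \<rho> \<Longrightarrow> sem M (lift t k) (take k \<rho> @ v # drop k \<rho>) = sem M t \<rho>"
proof (induct t arbitrary: k \<rho>)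
  case (Var i)
  then show ?case by (auto simp: nth_append min_absorb2)
next
  case (Lam A t)
  have "sem M (lift t (Suc k)) (a # take k \<rho> @ v # drop k \<rho>) = sem M t (a # \<rho>)" for a
    using Lam.hyps[of "Suc k" "a # \<rho>"] Lam.prems by simp
  then show ?case by simp
next
  case (Match t u1 u2)
  have "sem M (lift u (Suc k)) (a # take k \<rho> @ v # drop k \<rho>) = sem M u (a # \<rho>)"
    if "u \<in> {u1, u2}" for u a
    using that Match.hyps(2,3)[of "Suc k" "a # \<rho>"] Match.prems by auto
  then show ?case using Match by (simp split: val.split)
qed auto

lemma sem_lift0: "sem M (lift t 0) (v # \<rho>) = sem M t \<rho>"
  using sem_lift[of 0 \<rho> M t v] by simp

lemma sem_subst:
  "k \<le> length \<rho> \<Longrightarrow> sem M (subst t s k) \<rho> = sem M t (take k \<rho> @ sem M s \<rho> # drop k \<rho>)"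
proof (induct t arbitrary: k \<rho> s)
  case (Var i)
  then show ?case by (auto simp: nth_append min_absorb2)
next
  case (Lam A t)
  have "sem M (subst t (lift s 0) (Suc k)) (a # \<rho>) = sem M t (a # take k \<rho> @ sem M s \<rho> # drop k \<rho>)"
    for a using Lam.hyps[of "Suc k" "a # \<rho>"] Lam.prems by (simp add: sem_lift0)
  then show ?case by simp
next
  case (Match t u1 u2)
  have "sem M (subst u (lift s 0) (Suc k)) (a # \<rho>) = sem M u (a # take k \<rho> @ sem M s \<rho> # drop k \<rho>)"
    if "u \<in> {u1, u2}" for u a
    using that Match.hyps(2,3)[of "Suc k" "a # \<rho>"] Match.prems by (auto simp: sem_lift0)
  then show ?case using Match by (simp split: val.split)
qed auto

lemma sem_subst0: "sem M (subst t s 0) \<rho> = sem M t (sem M s \<rho> # \<rho>)"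
  using sem_subst[of 0 \<rho> M t s] by simp

section \<open>Soundness of beta-conversion\<close>

lemma par_sound:
  assumes M: "model M"
  shows "par t t' \<Longrightarrow> typing \<Gamma> t A \<Longrightarrow> \<rho> \<in> env_dom M \<Gamma> \<Longrightarrow> sem M t \<rho> = sem M t' \<rho>"
proof (induct arbitrary: \<Gamma> A \<rho> rule: par.induct)
  case (p_Lam t t' B)
  then obtain C where "typing (B # \<Gamma>) t C" by (auto simp: typing_Lam_iff)
  with p_Lam show ?case by (auto intro: vgraph_cong)
next
  case (p_Match t t' u1 u1' u2 u2')
  then obtain A1 A2 where t: "typing \<Gamma> t (Sum A1 A2)"
    and u: "typing (A1 # \<Gamma>) u1 A" "typing (A2 # \<Gamma>) u2 A"
    by (auto simp: typing_Match_iff)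
  then have "sem M t \<rho> = sem M t' \<rho>" using p_Match by blast
  moreover have "sem M t \<rho> \<in> dom (Sum (tsubst M A1) (tsubst M A2))"
    using sem_in_dom[OF t M] p_Match by simp
  ultimately show ?case using p_Match u by (auto split: val.split)
next
  case (p_beta t t' u u' B)
  then have t: "typing (B # \<Gamma>) t A" and u: "typing \<Gamma> u B"
    by (auto simp: typing_App_iff typing_Lam_iff)
  have u_dom: "sem M u \<rho> \<in> dom (tsubst M B)" using sem_in_dom[OF u M p_beta.prems(2)] .
  have "sem M (App (Lam B t) u) \<rho> = sem M t (sem M u \<rho> # \<rho>)"
    using u_dom M by (simp add: vapp_vgraph finite_dom_tsubst)
  also have "\<dots> = sem M t' (sem M u \<rho> # \<rho>)"
    using p_beta.hyps(2)[OF t] u_dom p_beta.prems(2) by simp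
  also have "\<dots> = sem M (subst t' u' 0) \<rho>"
    using p_beta.hyps(4)[OF u p_beta.prems(2)] by (simp add: sem_subst0)
  finally show ?case .
next
  case (p_inl t t' u1 u1' u2)
  then obtain A1 where t: "typing \<Gamma> t A1" and u: "typing (A1 # \<Gamma>) u1 A"
    by (auto simp: typing_Match_iff typing_Inl_iff)
  then show ?case using p_inl sem_in_dom[OF t M] by (simp add: sem_subst0)
next
  case (p_inr t t' u2 u2' u1)
  then obtain A2 where t: "typing \<Gamma> t A2" and u: "typing (A2 # \<Gamma>) u2 A"
    by (auto simp: typing_Match_iff typing_Inr_iff)
  then show ?case using p_inr sem_in_dom[OF t M] by (simp add: sem_subst0)
qed (fastforce simp: typing_iffs)+

lemma pars_preserves_typing: "par\<^sup>*\<^sup>* t t' \<Longrightarrow> typing \<Gamma> t A \<Longrightarrow> typing \<Gamma> t' A"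
  by (induct rule: rtranclp_induct) (auto intro: par_preserves_typing)

lemma pars_sound:
  "par\<^sup>*\<^sup>* t t' \<Longrightarrow> typing \<Gamma> t A \<Longrightarrow> model M \<Longrightarrow> \<rho> \<in> env_dom M \<Gamma> \<Longrightarrow> sem M t \<rho> = sem M t' \<rho>"
proof (induct rule: rtranclp_induct)
  case (step t' t'')
  then show ?case using par_sound pars_preserves_typing by metis
qed simp

lemma beq_sound:
  assumes "beq t u" and "typing \<Gamma> t A" and "typing \<Gamma> u A" and "model M" and "\<rho> \<in> env_dom M \<Gamma>"
  shows "sem M t \<rho> = sem M u \<rho>"
proof -
  obtain s where "par\<^sup>*\<^sup>* t s" and "par\<^sup>*\<^sup>* u s"
    using beq_common_par_reduct[OF assms(1)] by blast
  then show ?thesis using pars_sound assms(2-5) by metis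
qed

section \<open>Definability in closed types\<close>

abbreviation Bool :: ty where "Bool \<equiv> Sum One One"
abbreviation tt :: val where "tt \<equiv> VInl VUnit"
abbreviation ff :: val where "ff \<equiv> VInr VUnit"
abbreviation TT :: trm where "TT \<equiv> Inl Unit"
abbreviation FF :: trm where "FF \<equiv> Inr Unit"

definition denotes :: "(nat \<Rightarrow> ty) \<Rightarrow> trm \<Rightarrow> ty \<Rightarrow> val \<Rightarrow> bool" where
  "denotes M d T v \<longleftrightarrow> typing [] d T \<and> (\<forall>\<rho>. sem M d \<rho> = v)"

definition characteristic :: "(nat \<Rightarrow> ty) \<Rightarrow> trm \<Rightarrow> ty \<Rightarrow> val \<Rightarrow> bool" where
  "characteristic M c T v \<longleftrightarrow> typing [] c (Arr T Bool) \<and>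
     (\<forall>\<rho>. \<forall>x\<in>dom T. vapp (sem M c \<rho>) x = (if x = v then tt else ff))"

(* The last clause supplies the eliminator that defines the empty function at arrow types
   whose domain is empty. *)
definition fully_definable :: "(nat \<Rightarrow> ty) \<Rightarrow> ty \<Rightarrow> bool" where
  "fully_definable M T \<longleftrightarrow>
     (\<forall>v\<in>dom T. (\<exists>d. denotes M d T v) \<and> (\<exists>c. characteristic M c T v)) \<and>
     (dom T = {} \<longrightarrow> (\<exists>e. typing [] e (Arr T Zero)))"

lemma denotes_typing: "denotes M d T v \<Longrightarrow> typing \<Gamma> d T"
  by (simp add: denotes_def typing_closed)

lemma sem_denotes [simp]: "denotes M d T v \<Longrightarrow> sem M d \<rho> = v"
  by (simp add: denotes_def)

lemma characteristic_typing: "characteristic M c T v \<Longrightarrow> typing \<Gamma> c (Arr T Bool)"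
  by (simp add: characteristic_def typing_closed)

lemma sem_characteristic [simp]:
  "characteristic M c T v \<Longrightarrow> x \<in> dom T \<Longrightarrow> vapp (sem M c \<rho>) x = (if x = v then tt else ff)"
  by (simp add: characteristic_def)

lemma sem_Lam_closed:
  "closed T \<Longrightarrow> x \<in> dom T \<Longrightarrow> vapp (sem M (Lam T b) \<rho>) x = sem M b (x # \<rho>)"
  by (simp add: tsubst_closed finite_dom vapp_vgraph)

lemma fully_definable_One: "fully_definable M One"
proof -
  have "characteristic M (Lam One TT) One VUnit"
    unfolding characteristic_def by (auto intro: typing.intros simp: vapp_vgraph)
  moreover have "denotes M Unit One VUnit"
    unfolding denotes_def by (auto intro: typing.intros)
  ultimately show ?thesis unfolding fully_definable_def by auto
qed

lemma fully_definable_Zero: "fully_definable M Zero"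
proof -
  have "typing [] (Lam Zero (Var 0)) (Arr Zero Zero)" by (intro typing.intros) simp_all
  then show ?thesis unfolding fully_definable_def by auto
qed

lemma characteristic_Prod:
  assumes "closed A" "closed B" and ca: "characteristic M ca A a" and cb: "characteristic M cb B b"
  shows "characteristic M (Lam (Prod A B) (Match (App ca (Fst (Var 0))) (App cb (Snd (Var 1))) FF))
           (Prod A B) (VPair a b)"
  unfolding characteristic_def
proof (intro conjI allI ballI)
  show "typing [] (Lam (Prod A B) (Match (App ca (Fst (Var 0))) (App cb (Snd (Var 1))) FF))
          (Arr (Prod A B) Bool)"
    by (rule typing.intros characteristic_typing[OF ca] characteristic_typing[OF cb] | simp)+
  fix \<rho> x assume "x \<in> dom (Prod A B)"
  then show "vapp (sem M (Lam (Prod A B) (Match (App ca (Fst (Var 0))) (App cb (Snd (Var 1))) FF)) \<rho>) x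
               = (if x = VPair a b then tt else ff)"
    using ca cb assms(1,2) by (auto simp del: sem_Lam simp add: sem_Lam_closed split: if_splits)
qed

lemma characteristic_Inl:
  assumes "closed A" "closed B" and c: "characteristic M c A a"
  shows "characteristic M (Lam (Sum A B) (Match (Var 0) (App c (Var 0)) FF)) (Sum A B) (VInl a)"
  unfolding characteristic_def
proof (intro conjI allI ballI)
  show "typing [] (Lam (Sum A B) (Match (Var 0) (App c (Var 0)) FF)) (Arr (Sum A B) Bool)"
    by (rule typing.intros characteristic_typing[OF c] | simp)+
  fix \<rho> x assume "x \<in> dom (Sum A B)"
  then show "vapp (sem M (Lam (Sum A B) (Match (Var 0) (App c (Var 0)) FF)) \<rho>) x
               = (if x = VInl a then tt else ff)"
    using c assms(1,2) by (auto simp del: sem_Lam simp add: sem_Lam_closed split: if_splits)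
qed

lemma characteristic_Inr:
  assumes "closed A" "closed B" and c: "characteristic M c B b"
  shows "characteristic M (Lam (Sum A B) (Match (Var 0) FF (App c (Var 0)))) (Sum A B) (VInr b)"
  unfolding characteristic_def
proof (intro conjI allI ballI)
  show "typing [] (Lam (Sum A B) (Match (Var 0) FF (App c (Var 0)))) (Arr (Sum A B) Bool)"
    by (rule typing.intros characteristic_typing[OF c] | simp)+
  fix \<rho> x assume "x \<in> dom (Sum A B)"
  then show "vapp (sem M (Lam (Sum A B) (Match (Var 0) FF (App c (Var 0)))) \<rho>) x
               = (if x = VInr b then tt else ff)"
    using c assms(1,2) by (auto simp del: sem_Lam simp add: sem_Lam_closed split: if_splits)
qed

lemma fully_definable_Prod:
  assumes "closed A" "closed B" "fully_definable M A" "fully_definable M B"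
  shows "fully_definable M (Prod A B)"
proof -
  have "(\<exists>d. denotes M d (Prod A B) (VPair a b)) \<and> (\<exists>c. characteristic M c (Prod A B) (VPair a b))"
    if ab: "a \<in> dom A" "b \<in> dom B" for a b
  proof -
    obtain da db ca cb where d: "denotes M da A a" "denotes M db B b"
      and c: "characteristic M ca A a" "characteristic M cb B b"
      using assms(3,4) ab unfolding fully_definable_def by blast
    have "denotes M (Pair da db) (Prod A B) (VPair a b)"
      using d unfolding denotes_def by (auto intro: typing.intros)
    with characteristic_Prod[OF assms(1,2) c] show ?thesis by blast
  qed
  moreover have "\<exists>e. typing [] e (Arr (Prod A B) Zero)" if empty: "dom (Prod A B) = {}"
  proof (cases "dom A = {}")
    case True
    then obtain e where e: "typing [] e (Arr A Zero)"
      using assms(3) unfolding fully_definable_def by blast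
    have "typing [] (Lam (Prod A B) (App e (Fst (Var 0)))) (Arr (Prod A B) Zero)"
      by (rule typing.intros typing_closed[OF e] | simp)+
    then show ?thesis ..
  next
    case False
    then have "dom B = {}" using empty by auto
    then obtain e where e: "typing [] e (Arr B Zero)"
      using assms(4) unfolding fully_definable_def by blast
    have "typing [] (Lam (Prod A B) (App e (Snd (Var 0)))) (Arr (Prod A B) Zero)"
      by (rule typing.intros typing_closed[OF e] | simp)+
    then show ?thesis ..
  qed
  ultimately show ?thesis unfolding fully_definable_def by auto
qed

lemma fully_definable_Sum:
  assumes "closed A" "closed B" "fully_definable M A" "fully_definable M B"
  shows "fully_definable M (Sum A B)"
proof -
  have "(\<exists>d. denotes M d (Sum A B) v) \<and> (\<exists>c. characteristic M c (Sum A B) v)"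
    if v: "v \<in> dom (Sum A B)" for v
  proof -
    from v consider a where "v = VInl a" "a \<in> dom A" | b where "v = VInr b" "b \<in> dom B"
      by auto
    then show ?thesis
    proof cases
      case (1 a)
      then obtain d c where d: "denotes M d A a" and c: "characteristic M c A a"
        using assms(3) unfolding fully_definable_def by blast
      have "denotes M (Inl d) (Sum A B) (VInl a)"
        using d unfolding denotes_def by (auto intro: typing.intros)
      with characteristic_Inl[OF assms(1,2) c] 1 show ?thesis by blast
    next
      case (2 b)
      then obtain d c where d: "denotes M d B b" and c: "characteristic M c B b"
        using assms(4) unfolding fully_definable_def by blast
      have "denotes M (Inr d) (Sum A B) (VInr b)"
        using d unfolding denotes_def by (auto intro: typing.intros)
      with characteristic_Inr[OF assms(1,2) c] 2 show ?thesis by blast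
    qed
  qed
  moreover have "\<exists>e. typing [] e (Arr (Sum A B) Zero)" if empty: "dom (Sum A B) = {}"
  proof -
    obtain eA eB where eA: "typing [] eA (Arr A Zero)" and eB: "typing [] eB (Arr B Zero)"
      using assms(3,4) empty unfolding fully_definable_def by auto
    have "typing [] (Lam (Sum A B) (Match (Var 0) (App eA (Var 0)) (App eB (Var 0)))) (Arr (Sum A B) Zero)"
      by (rule typing.intros typing_closed[OF eA] typing_closed[OF eB] | simp)+
    then show ?thesis ..
  qed
  ultimately show ?thesis unfolding fully_definable_def by auto
qed

lemma fully_definable_witnesses:
  assumes "fully_definable M T"
  obtains d c where "\<And>v. v \<in> dom T \<Longrightarrow> denotes M (d v) T v \<and> characteristic M (c v) T v"
proof
  fix v assume "v \<in> dom T"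
  then show "denotes M (SOME d. denotes M d T v) T v \<and> characteristic M (SOME c. characteristic M c T v) T v"
    using assms unfolding fully_definable_def by (auto intro: someI)
qed

(* In the context [x : A], tabulate test out [c\<^sub>1, ..., c\<^sub>n] is the term
   if test c\<^sub>1 x then out c\<^sub>1 else ... else out c\<^sub>n; the last entry is the default. *)
fun tabulate :: "(val \<Rightarrow> trm) \<Rightarrow> (val \<Rightarrow> trm) \<Rightarrow> val list \<Rightarrow> trm" where
  "tabulate test out [c] = out c"
| "tabulate test out (c # cs) = Match (App (test c) (Var 0)) (out c) (lift (tabulate test out cs) 0)"

lemma typing_tabulate:
  assumes "cs \<noteq> []" and "\<forall>c\<in>set cs. characteristic M (test c) A c \<and> denotes M (out c) B (f c)"
  shows "typing [A] (tabulate test out cs) B"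
  using assms
proof (induct test out cs rule: tabulate.induct)
  case (2 test out c c' cs)
  then have IH: "typing [A] (tabulate test out (c' # cs)) B"
    and c: "characteristic M (test c) A c" "denotes M (out c) B (f c)" by auto
  show ?case
    unfolding tabulate.simps
    by (rule typing.intros characteristic_typing[OF c(1)] denotes_typing[OF c(2)] typing_lift0[OF IH] | simp)+
qed (auto intro: denotes_typing)

lemma sem_tabulate:
  assumes "x \<in> set cs" and "x \<in> dom A"
    and "\<forall>c\<in>set cs. characteristic M (test c) A c \<and> denotes M (out c) B (f c)"
  shows "sem M (tabulate test out cs) (x # \<rho>) = f x"
  using assms by (induct test out cs rule: tabulate.induct) (auto simp: sem_lift0)

fun graph_test :: "(val \<Rightarrow> trm) \<Rightarrow> (val \<Rightarrow> trm) \<Rightarrow> val list \<Rightarrow> trm" where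
  "graph_test arg test [] = TT"
| "graph_test arg test (c # cs) =
     Match (App (test c) (App (Var 0) (arg c))) (lift (graph_test arg test cs) 0) FF"

lemma typing_graph_test:
  assumes "\<forall>c\<in>set cs. denotes M (arg c) A c \<and> characteristic M (test c) B (g c)"
  shows "typing [Arr A B] (graph_test arg test cs) Bool"
  using assms
proof (induct cs)
  case (Cons c cs)
  then have IH: "typing [Arr A B] (graph_test arg test cs) Bool"
    and c: "denotes M (arg c) A c" "characteristic M (test c) B (g c)" by auto
  show ?case
    unfolding graph_test.simps
    by (rule typing.intros characteristic_typing[OF c(2)] denotes_typing[OF c(1)] typing_lift0[OF IH] | simp)+
qed (auto intro: typing.intros)

lemma sem_graph_test:
  assumes "f \<in> dom (Arr A B)" and "set cs \<subseteq> dom A"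
    and "\<forall>c\<in>set cs. denotes M (arg c) A c \<and> characteristic M (test c) B (g c)"
  shows "sem M (graph_test arg test cs) (f # \<rho>) = (if \<forall>c\<in>set cs. vapp f c = g c then tt else ff)"
  using assms
proof (induct cs)
  case (Cons c cs)
  have "vapp f c \<in> dom B" using Cons.prems(1,2) by (simp add: vapp_in_dom)
  with Cons show ?case by (auto simp: sem_lift0)
qed simp

lemma sem_Lam_eqI:
  assumes "closed A" and "v \<in> dom (Arr A B)" and "\<And>x. x \<in> dom A \<Longrightarrow> sem M b (x # \<rho>) = vapp v x"
  shows "sem M (Lam A b) \<rho> = v"
proof -
  have "sem M (Lam A b) \<rho> = vgraph (dom A) (\<lambda>x. sem M b (x # \<rho>))"
    using assms(1) by (simp add: tsubst_closed)
  also have "\<dots> = vgraph (dom A) (vapp v)"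
    using assms(3) by (rule vgraph_cong)
  also have "\<dots> = v" using assms(2) by (rule vgraph_vapp)
  finally show ?thesis .
qed

lemma denotes_Arr:
  assumes A: "closed A" and "fully_definable M A" "fully_definable M B" and v: "v \<in> dom (Arr A B)"
  shows "\<exists>d. denotes M d (Arr A B) v"
proof (cases "dom A = {}")
  case True
  then obtain e where e: "typing [] e (Arr A Zero)"
    using assms(2) unfolding fully_definable_def by blast
  let ?d = "Lam A (Absurd (App e (Var 0)))"
  have "typing [] ?d (Arr A B)"
    by (rule typing.intros typing_closed[OF e] | simp)+
  moreover have "sem M ?d \<rho> = v" for \<rho>
    using True by (intro sem_Lam_eqI[OF A v]) simp
  ultimately show ?thesis unfolding denotes_def by blast
next
  case False
  obtain chA where chA: "\<And>a. a \<in> dom A \<Longrightarrow> characteristic M (chA a) A a"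
    using assms(2) by (rule fully_definable_witnesses) blast
  obtain dB where dB: "\<And>b. b \<in> dom B \<Longrightarrow> denotes M (dB b) B b"
    using assms(3) by (rule fully_definable_witnesses) blast
  obtain cs where cs: "set cs = dom A"
    using finite_list[OF finite_dom[OF A]] by blast
  let ?d = "Lam A (tabulate chA (\<lambda>a. dB (vapp v a)) cs)"
  have table: "\<forall>c\<in>set cs. characteristic M (chA c) A c \<and> denotes M (dB (vapp v c)) B (vapp v c)"
    using cs chA dB vapp_in_dom[OF v] by auto
  have "cs \<noteq> []" using False cs by auto
  then have "typing [] ?d (Arr A B)"
    using typing_tabulate[OF _ table] by (auto intro: typing.T_Lam)
  moreover have "sem M ?d \<rho> = v" for \<rho>
    by (rule sem_Lam_eqI[OF A v]) (use sem_tabulate[OF _ _ table] cs in auto)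
  ultimately show ?thesis unfolding denotes_def by blast
qed

lemma characteristic_Arr:
  assumes A: "closed A" and B: "closed B" and "fully_definable M A" "fully_definable M B"
    and v: "v \<in> dom (Arr A B)"
  shows "\<exists>c. characteristic M c (Arr A B) v"
proof -
  obtain dA where dA: "\<And>a. a \<in> dom A \<Longrightarrow> denotes M (dA a) A a"
    using assms(3) by (rule fully_definable_witnesses) blast
  obtain chB where chB: "\<And>b. b \<in> dom B \<Longrightarrow> characteristic M (chB b) B b"
    using assms(4) by (rule fully_definable_witnesses) blast
  obtain cs where cs: "set cs = dom A"
    using finite_list[OF finite_dom[OF A]] by blast
  let ?c = "Lam (Arr A B) (graph_test dA (\<lambda>a. chB (vapp v a)) cs)"
  have tests: "\<forall>c\<in>set cs. denotes M (dA c) A c \<and> characteristic M (chB (vapp v c)) B (vapp v c)"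
    using cs dA chB vapp_in_dom[OF v] by auto
  have "typing [] ?c (Arr (Arr A B) Bool)"
    using typing_graph_test[OF tests] by (rule T_Lam)
  moreover have "vapp (sem M ?c \<rho>) f = (if f = v then tt else ff)" if f: "f \<in> dom (Arr A B)" for f \<rho>
  proof -
    have "vapp (sem M ?c \<rho>) f = sem M (graph_test dA (\<lambda>a. chB (vapp v a)) cs) (f # \<rho>)"
      using A B f by (intro sem_Lam_closed) simp_all
    also have "\<dots> = (if \<forall>c\<in>set cs. vapp f c = vapp v c then tt else ff)"
      using sem_graph_test[OF f _ tests] cs by simp
    also have "(\<forall>c\<in>set cs. vapp f c = vapp v c) \<longleftrightarrow> f = v"
      using vfun_ext[OF f v] cs by auto
    finally show ?thesis .
  qed
  ultimately show ?thesis unfolding characteristic_def by blast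
qed

lemma empty_dom_Arr:
  assumes "closed A" and "dom (Arr A B) = {}"
  shows "dom A \<noteq> {}" and "dom B = {}"
proof -
  have fin: "finite (dom A)" using assms(1) by (rule finite_dom)
  show "dom A \<noteq> {}"
  proof
    assume "dom A = {}"
    then have "vgraph (dom A) id \<in> dom (Arr A B)" using fin by (intro vgraph_in_dom) simp_all
    with assms(2) show False by blast
  qed
  show "dom B = {}"
  proof (rule ccontr)
    assume "dom B \<noteq> {}"
    then obtain b where "b \<in> dom B" by blast
    then have "vgraph (dom A) (\<lambda>_. b) \<in> dom (Arr A B)" using fin by (intro vgraph_in_dom) simp_all
    with assms(2) show False by blast
  qed
qed

lemma fully_definable_Arr:
  assumes "closed A" "closed B" "fully_definable M A" "fully_definable M B"
  shows "fully_definable M (Arr A B)"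
proof -
  have "\<exists>e. typing [] e (Arr (Arr A B) Zero)" if empty: "dom (Arr A B) = {}"
  proof -
    obtain a where a: "a \<in> dom A" using empty_dom_Arr(1)[OF assms(1) empty] by blast
    obtain d where d: "denotes M d A a"
      using assms(3) a unfolding fully_definable_def by blast
    obtain e where e: "typing [] e (Arr B Zero)"
      using assms(4) empty_dom_Arr(2)[OF assms(1) empty] unfolding fully_definable_def by blast
    have "typing [] (Lam (Arr A B) (App e (App (Var 0) d))) (Arr (Arr A B) Zero)"
      by (rule typing.intros typing_closed[OF e] denotes_typing[OF d] | simp)+
    then show ?thesis ..
  qed
  then show ?thesis
    using denotes_Arr[OF assms(1,3,4)] characteristic_Arr[OF assms] unfolding fully_definable_def by blast
qed

lemma closed_fully_definable: "closed T \<Longrightarrow> fully_definable M T"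
  by (induct T)
    (simp_all add: fully_definable_One fully_definable_Zero fully_definable_Prod fully_definable_Sum
      fully_definable_Arr)

section \<open>Separating contexts\<close>

lemma typing_msubst: "typing \<Gamma> t A \<Longrightarrow> typing (map (tsubst M) \<Gamma>) (msubst M t) (tsubst M A)"
  by (induct rule: typing.induct) (auto intro: typing.intros)

lemma sem_msubst: "model M \<Longrightarrow> sem M (msubst M t) \<rho> = sem M t \<rho>"
  by (induct t arbitrary: \<rho>) (simp_all add: closed_tsubst tsubst_closed split: val.split)

lemma typing_plug: "ctyping \<Delta> C \<Gamma> A B \<Longrightarrow> typing \<Gamma> s A \<Longrightarrow> typing \<Delta> (plug C s) B"
  by (induct rule: ctyping.induct) (auto intro: typing.intros)

(* The context (\<lambda>x\<^sub>n. ... (\<lambda>x\<^sub>1. \<box>) d\<^sub>1 ...) d\<^sub>n, where d\<^sub>i denotes \<rho> ! (i - 1). *)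
lemma closing_context:
  assumes "model M" and "\<rho> \<in> env_dom M \<Gamma>"
  shows "\<exists>C. (\<forall>\<Delta> A. ctyping \<Delta> C (map (tsubst M) \<Gamma> @ \<Delta>) A A) \<and>
             (\<forall>s \<sigma>. sem M (plug C s) \<sigma> = sem M s (\<rho> @ \<sigma>))"
  using assms(2)
proof (induct \<Gamma> arbitrary: \<rho> rule: rev_induct)
  case Nil
  then have "\<rho> = []" by (simp add: env_dom_def)
  then show ?case by (auto intro: ctyping.intros)
next
  case (snoc T \<Gamma>)
  then obtain \<rho>' v where \<rho>: "\<rho> = \<rho>' @ [v]" "\<rho>' \<in> env_dom M \<Gamma>" "v \<in> dom (tsubst M T)"
    by (auto simp: env_dom_iff_list_all2 list_all2_append2 list_all2_Cons2)
  obtain C where C: "\<forall>\<Delta> A. ctyping \<Delta> C (map (tsubst M) \<Gamma> @ \<Delta>) A A"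
    "\<forall>s \<sigma>. sem M (plug C s) \<sigma> = sem M s (\<rho>' @ \<sigma>)"
    using snoc.hyps \<rho>(2) by blast
  have closed: "closed (tsubst M T)" using assms(1) by (rule closed_tsubst)
  obtain d where d: "denotes M d (tsubst M T) v"
    using closed_fully_definable[OF closed] \<rho>(3) unfolding fully_definable_def by blast
  let ?C = "CAppL (CLam (tsubst M T) C) d"
  have "ctyping \<Delta> ?C (map (tsubst M) (\<Gamma> @ [T]) @ \<Delta>) A A" for \<Delta> A
    using C(1) denotes_typing[OF d] by (auto intro: ctyping.intros)
  moreover have "sem M (plug ?C s) \<sigma> = sem M s (\<rho> @ \<sigma>)" for s \<sigma>
    using C(2) d closed \<rho>(1,3) by (simp del: sem_Lam add: sem_Lam_closed)
  ultimately show ?case by blast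
qed

lemma separating_context:
  assumes M: "model M" and \<rho>: "\<rho> \<in> env_dom M \<Gamma>" and v: "v \<in> dom (tsubst M A)"
  shows "\<exists>D. ctyping [] D (map (tsubst M) \<Gamma>) (tsubst M A) Bool \<and>
             (\<forall>s. sem M s \<rho> \<in> dom (tsubst M A) \<longrightarrow>
                  sem M (plug D s) [] = (if sem M s \<rho> = v then tt else ff))"
proof -
  obtain C where C: "\<forall>\<Delta> B. ctyping \<Delta> C (map (tsubst M) \<Gamma> @ \<Delta>) B B"
    and sem_C: "\<forall>s \<sigma>. sem M (plug C s) \<sigma> = sem M s (\<rho> @ \<sigma>)"
    using closing_context[OF M \<rho>] by blast
  obtain \<chi> where \<chi>: "characteristic M \<chi> (tsubst M A) v"
    using closed_fully_definable[OF closed_tsubst[OF M]] v unfolding fully_definable_def by blast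
  have "ctyping [] C (map (tsubst M) \<Gamma>) (tsubst M A) (tsubst M A)"
    using C by (metis append_Nil2)
  then have "ctyping [] (CAppR \<chi> C) (map (tsubst M) \<Gamma>) (tsubst M A) Bool"
    by (rule CT_AppR[OF characteristic_typing[OF \<chi>]])
  moreover have "sem M (plug (CAppR \<chi> C) s) [] = (if sem M s \<rho> = v then tt else ff)"
    if "sem M s \<rho> \<in> dom (tsubst M A)" for s
    using sem_C \<chi> that by simp
  ultimately show ?thesis by blast
qed

theorem mainTheorem6:
  assumes "typing \<Gamma> t A" and "typing \<Gamma> u A" and "ctx_equiv \<Gamma> t u A"
  shows "sem_equiv \<Gamma> t u"
  unfolding sem_equiv_def
proof (intro allI impI)
  fix M \<rho> assume M: "model M" and \<rho>: "\<rho> \<in> env_dom M \<Gamma>"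
  have t: "sem M t \<rho> \<in> dom (tsubst M A)" and u: "sem M u \<rho> \<in> dom (tsubst M A)"
    using sem_in_dom assms(1,2) M \<rho> by blast+
  obtain D where D: "ctyping [] D (map (tsubst M) \<Gamma>) (tsubst M A) Bool"
    and sem_D: "\<forall>s. sem M s \<rho> \<in> dom (tsubst M A) \<longrightarrow>
                      sem M (plug D s) [] = (if sem M s \<rho> = sem M t \<rho> then tt else ff)"
    using separating_context[OF M \<rho> t] by blast
  have typing_D: "typing [] (plug D (msubst M s)) Bool" if "typing \<Gamma> s A" for s
    using typing_plug[OF D typing_msubst[OF that]] .
  have "beq (plug D (msubst M t)) (plug D (msubst M u))"
    using assms(3) M D unfolding ctx_equiv_def by blast
  then have "sem M (plug D (msubst M t)) [] = sem M (plug D (msubst M u)) []"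
    using typing_D[OF assms(1)] typing_D[OF assms(2)] M by (rule beq_sound) (simp add: env_dom_def)
  then show "sem M t \<rho> = sem M u \<rho>"
    using sem_D t u by (simp add: sem_msubst[OF M] split: if_splits)
qed

end
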